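(* Let $\bar a,\bar b$ realize the same complete type over $\emptyset$, suppose $tp(\bar a/\bar b)$ is not semi-isolated, and suppose $\varphi(\bar x,\bar a)\in tp(\bar b/\bar a)$ is a formula witnessing that $tp(\bar b/\bar a)$ is semi-isolated (i.e. every realization of $\varphi(\bar x,\bar a)$ realizes $tp(\bar b)$). Let $\bar c$ be any tuple with $tp(\bar c\bar b)=tp(\bar b\bar a)$. Then the formula $\varphi(\bar c,\bar x)\wedge\varphi(\bar x,\bar a)$ forks over $\emptyset$; in particular $tp(\bar b/\bar c\bar a)$ forks over $\emptyset$.
   Context: Work in the monster model of a complete first-order theory $T$. A (possibly partial) type $p$ forks over a set $A$ if there are an $L$-formula $\psi(\bar x,\bar y)$ and tuples $\bar d_i$ ($i<\omega$) such that $p\vdash\psi(\bar x,\bar d_0)$, $tp(\bar d_i/A)=tp(\bar d_0/A)$ for all $i$, and $\{\psi(\bar x,\bar d_i)\mid i<\omega\}$ is $k$-inconsistent for some $k<\omega$; a formula forks if the partial type consisting of it forks. $tp(\bar b/\bar a)$ is semi-isolated if there is a formula $\varphi(\bar x,\bar a)\in tp(\bar b/\bar a)$ every realization of which realizes $tp(\bar b)$. *)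

theory Defs
  imports Main "HOL-Library.Countable_Set"
begin

text \<open>Terms and formulas of a first-order language with function symbols of type 'f and
relation symbols of type 'r (a symbol applied to argument lists of different lengths is
treated as distinct symbols of the corresponding arities).\<close>

datatype 'f trm = Var nat | Fn 'f "'f trm list"

datatype ('f, 'r) fm =
    FFalse
  | FEq "'f trm" "'f trm"
  | FRel 'r "'f trm list"
  | FNeg "('f, 'r) fm"
  | FConj "('f, 'r) fm" "('f, 'r) fm"
  | FEx nat "('f, 'r) fm"

record ('a, 'f, 'r) struc =
  univ :: "'a set"
  fint :: "'f \<Rightarrow> 'a list \<Rightarrow> 'a"
  rint :: "'r \<Rightarrow> 'a list \<Rightarrow> bool"

definition is_struc :: "('a, 'f, 'r) struc \<Rightarrow> bool" where
  "is_struc M \<longleftrightarrow> univ M \<noteq> {} \<and> (\<forall>f xs. set xs \<subseteq> univ M \<longrightarrow> fint M f xs \<in> univ M)"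

fun fvt :: "'f trm \<Rightarrow> nat set" where
  "fvt (Var i) = {i}"
| "fvt (Fn f ts) = (\<Union>t\<in>set ts. fvt t)"

fun fv :: "('f, 'r) fm \<Rightarrow> nat set" where
  "fv FFalse = {}"
| "fv (FEq s t) = fvt s \<union> fvt t"
| "fv (FRel r ts) = (\<Union>t\<in>set ts. fvt t)"
| "fv (FNeg \<phi>) = fv \<phi>"
| "fv (FConj \<phi> \<psi>) = fv \<phi> \<union> fv \<psi>"
| "fv (FEx i \<phi>) = fv \<phi> - {i}"

fun evalt :: "('a, 'f, 'r) struc \<Rightarrow> (nat \<Rightarrow> 'a) \<Rightarrow> 'f trm \<Rightarrow> 'a" where
  "evalt M e (Var i) = e i"
| "evalt M e (Fn f ts) = fint M f (map (evalt M e) ts)"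

fun sat :: "('a, 'f, 'r) struc \<Rightarrow> (nat \<Rightarrow> 'a) \<Rightarrow> ('f, 'r) fm \<Rightarrow> bool" where
  "sat M e FFalse = False"
| "sat M e (FEq s t) = (evalt M e s = evalt M e t)"
| "sat M e (FRel r ts) = rint M r (map (evalt M e) ts)"
| "sat M e (FNeg \<phi>) = (\<not> sat M e \<phi>)"
| "sat M e (FConj \<phi> \<psi>) = (sat M e \<phi> \<and> sat M e \<psi>)"
| "sat M e (FEx i \<phi>) = (\<exists>a\<in>univ M. sat M (e(i := a)) \<phi>)"

text \<open>Only used for formulas whose free variables are among \<open>{..<length xs}\<close>.\<close>
definition holds :: "('a, 'f, 'r) struc \<Rightarrow> ('f, 'r) fm \<Rightarrow> 'a list \<Rightarrow> bool" where
  "holds M \<phi> xs \<longleftrightarrow> sat M (\<lambda>i. xs ! i) \<phi>"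

definition same_tp :: "('a, 'f, 'r) struc \<Rightarrow> 'a list \<Rightarrow> 'a list \<Rightarrow> bool" where
  "same_tp M xs ys \<longleftrightarrow> length xs = length ys \<and>
     (\<forall>\<phi>::('f,'r) fm. fv \<phi> \<subseteq> {..<length xs} \<longrightarrow> (holds M \<phi> xs \<longleftrightarrow> holds M \<phi> ys))"

definition tuples :: "('a, 'f, 'r) struc \<Rightarrow> nat \<Rightarrow> 'a list set" where
  "tuples M n = {xs. set xs \<subseteq> univ M \<and> length xs = n}"

text \<open>A formula with parameters in the variables \<open>x_0,...,x_{n-1}\<close> is an instance
\<open>\<theta>(u_0,...,u_{k-1})\<close> of a formula \<open>\<theta>(v_0,...,v_{k-1})\<close> where each \<open>u_j\<close> is either a
variable \<open>x_i\<close> (Inl i) or a parameter a (Inr a).\<close>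
type_synonym ('a, 'f, 'r) pfm = "('f, 'r) fm \<times> (nat + 'a) list"

definition arg_val :: "'a list \<Rightarrow> nat + 'a \<Rightarrow> 'a" where
  "arg_val xs u = (case u of Inl i \<Rightarrow> xs ! i | Inr a \<Rightarrow> a)"

definition holds_p :: "('a, 'f, 'r) struc \<Rightarrow> ('a, 'f, 'r) pfm \<Rightarrow> 'a list \<Rightarrow> bool" where
  "holds_p M p xs \<longleftrightarrow> holds M (fst p) (map (arg_val xs) (snd p))"

definition wf_pfm :: "('a, 'f, 'r) struc \<Rightarrow> nat \<Rightarrow> ('a, 'f, 'r) pfm \<Rightarrow> bool" where
  "wf_pfm M n p \<longleftrightarrow> fv (fst p) \<subseteq> {..<length (snd p)} \<and>
     (\<forall>u\<in>set (snd p). (\<forall>i. u = Inl i \<longrightarrow> i < n) \<and> (\<forall>a. u = Inr a \<longrightarrow> a \<in> univ M))"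

definition params :: "('a, 'f, 'r) pfm \<Rightarrow> 'a set" where
  "params p = {a. Inr a \<in> set (snd p)}"

definition realizes :: "('a, 'f, 'r) struc \<Rightarrow> nat \<Rightarrow> 'a list \<Rightarrow> ('a, 'f, 'r) pfm set \<Rightarrow> bool" where
  "realizes M n xs P \<longleftrightarrow> xs \<in> tuples M n \<and> (\<forall>p\<in>P. holds_p M p xs)"

definition split_pfm :: "nat \<Rightarrow> ('f, 'r) fm \<Rightarrow> 'a list \<Rightarrow> ('a, 'f, 'r) pfm" where
  "split_pfm n \<phi> d = (\<phi>, map Inl [0..<n] @ map Inr d)"

definition tp_over :: "('a, 'f, 'r) struc \<Rightarrow> 'a list \<Rightarrow> 'a list \<Rightarrow> ('a, 'f, 'r) pfm set" where
  "tp_over M b e = {split_pfm (length b) \<theta> e | \<theta>.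
      fv \<theta> \<subseteq> {..<length b + length e} \<and> holds M \<theta> (b @ e)}"

definition aleph1_saturated :: "('a, 'f, 'r) struc \<Rightarrow> bool" where
  "aleph1_saturated M \<longleftrightarrow> (\<forall>n (P :: ('a,'f,'r) pfm set) A.
      A \<subseteq> univ M \<longrightarrow> countable A \<longrightarrow> (\<forall>p\<in>P. wf_pfm M n p \<and> params p \<subseteq> A) \<longrightarrow>
      (\<forall>Q\<subseteq>P. finite Q \<longrightarrow> (\<exists>xs. realizes M n xs Q)) \<longrightarrow> (\<exists>xs. realizes M n xs P))"

definition semi_isolated :: "('a, 'f, 'r) struc \<Rightarrow> 'a list \<Rightarrow> 'a list \<Rightarrow> bool" where
  "semi_isolated M b a \<longleftrightarrow> (\<exists>\<phi>. fv \<phi> \<subseteq> {..<length b + length a} \<and> holds M \<phi> (b @ a) \<and>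
      (\<forall>b'\<in>tuples M (length b). holds M \<phi> (b' @ a) \<longrightarrow> same_tp M b' b))"

definition forks :: "('a, 'f, 'r) struc \<Rightarrow> nat \<Rightarrow> ('a, 'f, 'r) pfm set \<Rightarrow> bool" where
  "forks M n P \<longleftrightarrow> (\<exists>(\<psi>::('f,'r) fm) (d :: nat \<Rightarrow> 'a list) (k::nat).
      fv \<psi> \<subseteq> {..<n + length (d 0)} \<and>
      (\<forall>i. set (d i) \<subseteq> univ M \<and> same_tp M (d i) (d 0)) \<and>
      (\<forall>xs. realizes M n xs P \<longrightarrow> holds M \<psi> (xs @ d 0)) \<and>
      (\<forall>S::nat set. card S = k \<and> finite S \<longrightarrow>
          \<not> (\<exists>xs\<in>tuples M n. \<forall>i\<in>S. holds M \<psi> (xs @ d i))))"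

end

theory Submission
  imports Defs
begin

text \<open>Starting from \<open>E\<^sub>0 = a\<close>, \<open>E\<^sub>1 = c\<close>, saturation extends c b a to a chain
  \<open>\<dots> E\<^sub>2 B\<^sub>1 E\<^sub>1 B\<^sub>0 E\<^sub>0\<close> in which every triple
  \<open>E\<^sub>k\<^sub>+\<^sub>1 B\<^sub>k E\<^sub>k\<close> has the type of c b a. Since \<open>\<phi>(x, a)\<close> semi-isolates
  \<open>tp(b/a)\<close>, every realization of \<open>\<phi>(x, y)\<close> with \<open>y \<equiv> a\<close> has a semi-isolated
  type over y, so all of \<open>tp(E\<^sub>k\<^sub>+\<^sub>1/B\<^sub>k)\<close> and \<open>tp(B\<^sub>k/E\<^sub>k)\<close>
  are semi-isolated, and by transitivity so is \<open>tp(E\<^sub>m/B\<^sub>k)\<close> for \<open>k < m\<close>.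
  The parameters \<open>d\<^sub>i = E\<^sub>2\<^sub>i\<^sub>+\<^sub>1 E\<^sub>2\<^sub>i\<close> all have the type of c a,
  and a common solution x of \<open>\<phi>(E\<^sub>2\<^sub>i\<^sub>+\<^sub>1, x) \<and> \<phi>(x, E\<^sub>2\<^sub>i)\<close> for two
  indices \<open>i < j\<close> would make \<open>tp(E\<^sub>2\<^sub>i\<^sub>+\<^sub>1/B\<^sub>2\<^sub>i\<^sub>+\<^sub>1) = tp(a/b)\<close>
  semi-isolated. So \<open>\<phi>(c, x) \<and> \<phi>(x, a)\<close> divides, with 2-inconsistency.\<close>

section \<open>Renaming variables and quantifying blocks of variables\<close>

fun rent :: "(nat \<Rightarrow> nat) \<Rightarrow> 'f trm \<Rightarrow> 'f trm" where
  "rent f (Var i) = Var (f i)"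
| "rent f (Fn g ts) = Fn g (map (rent f) ts)"

fun ren :: "(nat \<Rightarrow> nat) \<Rightarrow> ('f, 'r) fm \<Rightarrow> ('f, 'r) fm" where
  "ren f FFalse = FFalse"
| "ren f (FEq s t) = FEq (rent f s) (rent f t)"
| "ren f (FRel r ts) = FRel r (map (rent f) ts)"
| "ren f (FNeg \<phi>) = FNeg (ren f \<phi>)"
| "ren f (FConj \<phi> \<psi>) = FConj (ren f \<phi>) (ren f \<psi>)"
| "ren f (FEx i \<phi>) = FEx (f i) (ren f \<phi>)"

lemma evalt_rent: "evalt M e (rent f t) = evalt M (e \<circ> f) t"
  by (induction t) (simp_all cong: map_cong)

lemma fvt_rent: "fvt (rent f t) = f ` fvt t"
  by (induction t) auto

lemma sat_ren: "inj f \<Longrightarrow> sat M e (ren f \<phi>) = sat M (e \<circ> f) \<phi>"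
proof (induction \<phi> arbitrary: e)
  case (FEx i \<phi>)
  have "(e(f i := a)) \<circ> f = (e \<circ> f)(i := a)" for a
    using FEx.prems by (auto simp: fun_eq_iff inj_eq)
  then have "sat M (e(f i := a)) (ren f \<phi>) = sat M ((e \<circ> f)(i := a)) \<phi>" for a
    using FEx by metis
  then show ?case
    by (simp only: ren.simps sat.simps)
qed (simp_all add: evalt_rent comp_def)

lemma fv_ren: "inj f \<Longrightarrow> fv (ren f \<phi>) = f ` fv \<phi>"
  by (induction \<phi>) (auto simp: fvt_rent image_set_diff)

lemma evalt_cong: "\<forall>i\<in>fvt t. e i = e' i \<Longrightarrow> evalt M e t = evalt M e' t"
  by (induction t) (simp_all cong: map_cong)

lemma sat_cong: "\<forall>i\<in>fv \<phi>. e i = e' i \<Longrightarrow> sat M e \<phi> = sat M e' \<phi>"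
proof (induction \<phi> arbitrary: e e')
  case (FEq s t)
  then show ?case
    using evalt_cong[of s e e' M] evalt_cong[of t e e' M] by simp
next
  case (FRel r ts)
  then have "map (evalt M e) ts = map (evalt M e') ts"
    using evalt_cong[of _ e e' M] by (intro map_cong) auto
  then show ?case by (simp only: sat.simps)
next
  case (FConj \<phi>\<^sub>1 \<phi>\<^sub>2)
  then show ?case by (metis UnCI sat.simps(5) fv.simps(5))
next
  case (FEx i \<phi>)
  have "sat M (e(i := a)) \<phi> = sat M (e'(i := a)) \<phi>" for a
    by (rule FEx.IH) (use FEx.prems in auto)
  then show ?case by simp
qed auto

lemma sat_foldr_FEx:
  "sat M e (foldr FEx vs \<phi>) \<longleftrightarrow>
     (\<exists>e'. (\<forall>i. i \<notin> set vs \<longrightarrow> e' i = e i) \<and> (\<forall>i\<in>set vs. e' i \<in> univ M) \<and> sat M e' \<phi>)"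
proof (induction vs arbitrary: e)
  case Nil
  have "(\<forall>i. e' i = e i) \<longleftrightarrow> e' = e" for e' :: "nat \<Rightarrow> 'a" by auto
  then show ?case by auto
next
  case (Cons v vs)
  show ?case
  proof
    assume "sat M e (foldr FEx (v # vs) \<phi>)"
    then obtain a e' where "a \<in> univ M" "\<forall>i. i \<notin> set vs \<longrightarrow> e' i = (e(v := a)) i"
      "\<forall>i\<in>set vs. e' i \<in> univ M" "sat M e' \<phi>"
      using Cons.IH by auto
    then show "\<exists>e'. (\<forall>i. i \<notin> set (v # vs) \<longrightarrow> e' i = e i) \<and> (\<forall>i\<in>set (v # vs). e' i \<in> univ M) \<and> sat M e' \<phi>"
      by (intro exI[of _ e']) (metis fun_upd_apply list.set_intros set_ConsD)
  next
    assume "\<exists>e'. (\<forall>i. i \<notin> set (v # vs) \<longrightarrow> e' i = e i) \<and> (\<forall>i\<in>set (v # vs). e' i \<in> univ M) \<and> sat M e' \<phi>"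
    then obtain e' where e': "\<forall>i. i \<notin> set (v # vs) \<longrightarrow> e' i = e i"
      "\<forall>i\<in>set (v # vs). e' i \<in> univ M" "sat M e' \<phi>"
      by blast
    then have "sat M (e(v := e' v)) (foldr FEx vs \<phi>)"
      using Cons.IH by auto
    then show "sat M e (foldr FEx (v # vs) \<phi>)"
      using e' by auto
  qed
qed

lemma fv_foldr_FEx: "fv (foldr FEx vs \<phi>) = fv \<phi> - set vs"
  by (induction vs) auto

fun conjs :: "('f, 'r) fm list \<Rightarrow> ('f, 'r) fm" where
  "conjs [] = FNeg FFalse"
| "conjs (\<theta> # \<Theta>) = FConj \<theta> (conjs \<Theta>)"

lemma sat_conjs: "sat M e (conjs \<Theta>) \<longleftrightarrow> (\<forall>\<theta>\<in>set \<Theta>. sat M e \<theta>)"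
  by (induction \<Theta>) auto

lemma fv_conjs: "fv (conjs \<Theta>) = (\<Union>\<theta>\<in>set \<Theta>. fv \<theta>)"
  by (induction \<Theta>) auto

lemma holds_FNeg [simp]: "holds M (FNeg \<phi>) xs \<longleftrightarrow> \<not> holds M \<phi> xs"
  by (simp add: holds_def)

lemma holds_FConj [simp]: "holds M (FConj \<phi> \<psi>) xs \<longleftrightarrow> holds M \<phi> xs \<and> holds M \<psi> xs"
  by (simp add: holds_def)

lemma holds_conjs: "holds M (conjs \<Theta>) xs \<longleftrightarrow> (\<forall>\<theta>\<in>set \<Theta>. holds M \<theta> xs)"
  by (simp add: holds_def sat_conjs)

lemma holds_append_right:
  "fv \<phi> \<subseteq> {..<length u} \<Longrightarrow> holds M \<phi> (u @ v) = holds M \<phi> u"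
  unfolding holds_def by (rule sat_cong) (auto simp: nth_append)

definition insert_gap :: "nat \<Rightarrow> nat \<Rightarrow> nat \<Rightarrow> nat" where
  "insert_gap k l i = (if i < k then i else i + l)"

definition block_swap :: "nat \<Rightarrow> nat \<Rightarrow> nat \<Rightarrow> nat" where
  "block_swap k m i = (if i < k then i + m else if i < k + m then i - k else i)"

lemma inj_insert_gap: "inj (insert_gap k l)"
  by (auto simp: inj_def insert_gap_def split: if_splits)

lemma inj_block_swap: "inj (block_swap k m)"
  by (auto simp: inj_def block_swap_def split: if_splits)

lemma fv_ren_insert_gap:
  "fv \<phi> \<subseteq> {..<k + m} \<Longrightarrow> fv (ren (insert_gap k l) \<phi>) \<subseteq> {..<k + l + m}"
  by (auto simp: fv_ren inj_insert_gap insert_gap_def)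

lemma fv_ren_block_swap:
  "fv \<phi> \<subseteq> {..<k + m} \<Longrightarrow> fv (ren (block_swap k m) \<phi>) \<subseteq> {..<k + m}"
  by (auto simp: fv_ren inj_block_swap block_swap_def)

lemma holds_ren_insert_gap:
  "holds M (ren (insert_gap (length u) (length w)) \<phi>) (u @ w @ v) = holds M \<phi> (u @ v)"
proof -
  have "(\<lambda>i. (u @ w @ v) ! i) \<circ> insert_gap (length u) (length w) = (\<lambda>i. (u @ v) ! i)"
    by (auto simp: fun_eq_iff insert_gap_def nth_append)
  then show ?thesis
    by (simp add: holds_def sat_ren inj_insert_gap)
qed

lemma holds_ren_block_swap:
  assumes "fv \<phi> \<subseteq> {..<length v + length u}"
  shows "holds M (ren (block_swap (length v) (length u)) \<phi>) (u @ v) = holds M \<phi> (v @ u)"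
  unfolding holds_def sat_ren[OF inj_block_swap]
  by (rule sat_cong) (use assms in \<open>auto simp: block_swap_def nth_append\<close>)

definition ex_prefix :: "nat \<Rightarrow> nat \<Rightarrow> ('f, 'r) fm \<Rightarrow> ('f, 'r) fm" where
  "ex_prefix k m \<phi> = foldr FEx [m..<m + k] (ren (block_swap k m) \<phi>)"

lemma fv_ex_prefix: "fv \<phi> \<subseteq> {..<k + m} \<Longrightarrow> fv (ex_prefix k m \<phi>) \<subseteq> {..<m}"
  using fv_ren_block_swap[of \<phi> k m] by (auto simp: ex_prefix_def fv_foldr_FEx)

lemma holds_ex_prefix:
  assumes "fv \<phi> \<subseteq> {..<k + length w}"
  shows "holds M (ex_prefix k (length w) \<phi>) w \<longleftrightarrow> (\<exists>x\<in>tuples M k. holds M \<phi> (x @ w))"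
proof
  let ?m = "length w" and ?\<chi> = "ren (block_swap k (length w)) \<phi>"
  have swap: "holds M ?\<chi> (w @ x) = holds M \<phi> (x @ w)" if "length x = k" for x
    using holds_ren_block_swap[of \<phi> x w M] assms that by simp
  assume "holds M (ex_prefix k ?m \<phi>) w"
  then obtain e' where e': "\<forall>i. i \<notin> {?m..<?m + k} \<longrightarrow> e' i = w ! i"
    "\<forall>i\<in>{?m..<?m + k}. e' i \<in> univ M" "sat M e' ?\<chi>"
    by (auto simp: holds_def ex_prefix_def sat_foldr_FEx)
  define x where "x = map (\<lambda>i. e' (?m + i)) [0..<k]"
  have "\<forall>i\<in>fv ?\<chi>. e' i = (w @ x) ! i"
  proof
    fix i assume "i \<in> fv ?\<chi>"
    then have "i < ?m + k"
      using fv_ren_block_swap[OF assms] by auto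
    then show "e' i = (w @ x) ! i"
      using e'(1) by (cases "i < ?m") (auto simp: x_def nth_append)
  qed
  then have "holds M ?\<chi> (w @ x)"
    using e'(3) sat_cong unfolding holds_def by blast
  moreover have "x \<in> tuples M k"
    using e'(2) by (auto simp: x_def tuples_def)
  ultimately show "\<exists>x\<in>tuples M k. holds M \<phi> (x @ w)"
    using swap by (auto simp: tuples_def)
next
  let ?m = "length w" and ?\<chi> = "ren (block_swap k (length w)) \<phi>"
  assume "\<exists>x\<in>tuples M k. holds M \<phi> (x @ w)"
  then obtain x where x: "set x \<subseteq> univ M" "length x = k" "holds M \<phi> (x @ w)"
    by (auto simp: tuples_def)
  then have "sat M (\<lambda>i. (w @ x) ! i) ?\<chi>"
    using holds_ren_block_swap[of \<phi> x w M] assms by (simp add: holds_def)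
  then have "sat M (\<lambda>i. if i < ?m + k then (w @ x) ! i else w ! i) ?\<chi>"
    by (rule sat_cong[THEN iffD1, rotated]) (use fv_ren_block_swap[OF assms] in auto)
  moreover have "(w @ x) ! i \<in> univ M" if "i \<in> {?m..<?m + k}" for i
    using that x(1,2) by (auto simp: nth_append)
  ultimately show "holds M (ex_prefix k ?m \<phi>) w"
    unfolding holds_def ex_prefix_def sat_foldr_FEx
    by (intro exI[of _ "\<lambda>i. if i < ?m + k then (w @ x) ! i else w ! i"]) (auto simp: nth_append)
qed

section \<open>Equality of types and saturation\<close>

lemma same_tp_refl: "same_tp M xs xs"
  by (simp add: same_tp_def)

lemma same_tp_sym: "same_tp M xs ys \<Longrightarrow> same_tp M ys xs"
  by (simp add: same_tp_def)

lemma same_tp_trans: "same_tp M xs ys \<Longrightarrow> same_tp M ys zs \<Longrightarrow> same_tp M xs zs"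
  by (simp add: same_tp_def)

lemma same_tp_length: "same_tp M xs ys \<Longrightarrow> length xs = length ys"
  by (simp add: same_tp_def)

lemma same_tp_holds:
  "same_tp M xs ys \<Longrightarrow> fv \<phi> \<subseteq> {..<length xs} \<Longrightarrow> holds M \<phi> xs = holds M \<phi> ys"
  by (simp add: same_tp_def)

lemma same_tpI:
  fixes M :: "('a, 'f, 'r) struc"
  assumes "length xs = length ys"
    and "\<And>\<phi> :: ('f, 'r) fm. fv \<phi> \<subseteq> {..<length ys} \<Longrightarrow> holds M \<phi> ys \<Longrightarrow> holds M \<phi> xs"
  shows "same_tp M xs ys"
  unfolding same_tp_def
proof (intro conjI allI impI)
  fix \<phi> :: "('f, 'r) fm"
  assume "fv \<phi> \<subseteq> {..<length xs}"
  then show "holds M \<phi> xs = holds M \<phi> ys"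
    using assms assms(2)[of "FNeg \<phi>"] by auto
qed (rule assms(1))

lemma same_tp_drop_middle:
  assumes "same_tp M (u @ w @ v) (u' @ w' @ v')" "length u = length u'" "length w = length w'"
  shows "same_tp M (u @ v) (u' @ v')"
proof (rule same_tpI)
  show "length (u @ v) = length (u' @ v')"
    using same_tp_length[OF assms(1)] assms(2,3) by simp
  fix \<phi> assume fv: "fv \<phi> \<subseteq> {..<length (u' @ v')}" and "holds M \<phi> (u' @ v')"
  then have "holds M (ren (insert_gap (length u') (length w')) \<phi>) (u' @ w' @ v')"
    by (simp add: holds_ren_insert_gap)
  moreover have "fv (ren (insert_gap (length u') (length w')) \<phi>) \<subseteq> {..<length (u @ w @ v)}"
    using fv_ren_insert_gap[of \<phi> "length u'" "length v'" "length w'"] fv same_tp_length[OF assms(1)]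
    by (simp add: add.commute add.left_commute)
  ultimately show "holds M \<phi> (u @ v)"
    using same_tp_holds[OF assms(1)] holds_ren_insert_gap assms(2,3) by metis
qed

lemma same_tp_prefix:
  "same_tp M (u @ v) (u' @ v') \<Longrightarrow> length u = length u' \<Longrightarrow> same_tp M u u'"
  using same_tp_drop_middle[of M u v "[]" u' v' "[]"] same_tp_length by fastforce

lemma same_tp_suffix:
  "same_tp M (u @ v) (u' @ v') \<Longrightarrow> length u = length u' \<Longrightarrow> same_tp M v v'"
  using same_tp_drop_middle[of M "[]" u v "[]" u' v'] by simp

lemma same_tp_swap:
  assumes "same_tp M (u @ v) (u' @ v')" "length u = length u'"
  shows "same_tp M (v @ u) (v' @ u')"
proof (rule same_tpI)
  have lv: "length v = length v'"
    using same_tp_length[OF assms(1)] assms(2) by simp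
  then show "length (v @ u) = length (v' @ u')"
    using assms(2) by simp
  fix \<phi> assume fv: "fv \<phi> \<subseteq> {..<length (v' @ u')}" and "holds M \<phi> (v' @ u')"
  then have "holds M (ren (block_swap (length v') (length u')) \<phi>) (u' @ v')"
    by (simp add: holds_ren_block_swap)
  moreover have "fv (ren (block_swap (length v') (length u')) \<phi>) \<subseteq> {..<length (u @ v)}"
    using fv_ren_block_swap[of \<phi> "length v'" "length u'"] fv lv assms(2) by (simp add: add.commute)
  ultimately show "holds M \<phi> (v @ u)"
    using same_tp_holds[OF assms(1)] holds_ren_block_swap fv lv assms(2) by (metis length_append)
qed

lemma map_arg_val_Inl: "map (arg_val xs) (map Inl [0..<length xs]) = xs"
  by (simp add: arg_val_def comp_def map_nth)

lemma holds_p_split_pfm: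
  assumes "length xs = n"
  shows "holds_p M (split_pfm n \<phi> e) xs \<longleftrightarrow> holds M \<phi> (xs @ e)"
  using map_arg_val_Inl[of xs] unfolding assms
  by (simp add: holds_p_def split_pfm_def arg_val_def comp_def)

lemma holds_p_Inr_Inl:
  assumes "length xs = n"
  shows "holds_p M (\<phi>, map Inr e @ map Inl [0..<n]) xs \<longleftrightarrow> holds M \<phi> (e @ xs)"
  using map_arg_val_Inl[of xs] unfolding assms
  by (simp add: holds_p_def arg_val_def comp_def)

lemma same_tp_extend:
  fixes M :: "('a, 'f, 'r) struc"
  assumes sat: "aleph1_saturated M" and ee: "same_tp M e e\<^sub>0"
    and e: "set e \<subseteq> univ M" and q\<^sub>0: "set q\<^sub>0 \<subseteq> univ M"
  obtains q where "q \<in> tuples M (length q\<^sub>0)" "same_tp M (q @ e) (q\<^sub>0 @ e\<^sub>0)"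
proof -
  define k where "k = length q\<^sub>0"
  define m where "m = length e"
  have lm: "length e\<^sub>0 = m"
    using same_tp_length[OF ee] by (simp add: m_def)
  define Th where "Th = {\<theta> :: ('f, 'r) fm. fv \<theta> \<subseteq> {..<k + m} \<and> holds M \<theta> (q\<^sub>0 @ e\<^sub>0)}"
  define P where "P = (\<lambda>\<theta>. split_pfm k \<theta> e) ` Th"
  have "\<exists>xs. realizes M k xs Q" if Q: "Q \<subseteq> P" "finite Q" for Q
  proof -
    obtain L where L: "set L \<subseteq> Th" "Q = (\<lambda>\<theta>. split_pfm k \<theta> e) ` set L"
      using Q unfolding P_def by (metis finite_list finite_subset_image)
    have fvC: "fv (conjs L) \<subseteq> {..<k + m}"
      using L by (auto simp: fv_conjs Th_def)
    have "holds M (conjs L) (q\<^sub>0 @ e\<^sub>0)"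
      using L by (auto simp: holds_conjs Th_def)
    then have "holds M (ex_prefix k m (conjs L)) e\<^sub>0"
      using holds_ex_prefix[of "conjs L" k e\<^sub>0 M] fvC lm q\<^sub>0 by (auto simp: tuples_def k_def)
    then have "holds M (ex_prefix k m (conjs L)) e"
      using same_tp_holds[OF ee, of "ex_prefix k m (conjs L)"] fv_ex_prefix[OF fvC] by (simp add: m_def)
    then obtain q where "q \<in> tuples M k" "holds M (conjs L) (q @ e)"
      using holds_ex_prefix[of "conjs L" k e M] fvC by (auto simp: m_def)
    then have "realizes M k q Q"
      using L by (auto simp: realizes_def holds_conjs tuples_def holds_p_split_pfm)
    then show ?thesis ..
  qed
  moreover have "wf_pfm M k p \<and> params p \<subseteq> set e" if "p \<in> P" for p
    using e that by (auto simp: P_def Th_def wf_pfm_def params_def split_pfm_def m_def)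
  ultimately obtain q where q: "realizes M k q P"
    using sat[unfolded aleph1_saturated_def, rule_format, of "set e" P k] e by (auto intro: countable_finite)
  then have lq: "q \<in> tuples M k"
    by (simp add: realizes_def)
  have "same_tp M (q @ e) (q\<^sub>0 @ e\<^sub>0)"
  proof (rule same_tpI)
    show "length (q @ e) = length (q\<^sub>0 @ e\<^sub>0)"
      using lq lm by (simp add: tuples_def k_def m_def)
    fix \<theta> assume "fv \<theta> \<subseteq> {..<length (q\<^sub>0 @ e\<^sub>0)}" "holds M \<theta> (q\<^sub>0 @ e\<^sub>0)"
    then have "split_pfm k \<theta> e \<in> P"
      using lm by (auto simp: P_def Th_def k_def)
    then show "holds M \<theta> (q @ e)"
      using q lq by (auto simp: realizes_def tuples_def holds_p_split_pfm)
  qed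
  then show ?thesis
    using that lq by (simp add: k_def)
qed

section \<open>Semi-isolation\<close>

definition semi_isolates :: "('a, 'f, 'r) struc \<Rightarrow> ('f, 'r) fm \<Rightarrow> 'a list \<Rightarrow> 'a list \<Rightarrow> bool" where
  "semi_isolates M \<phi> u v \<longleftrightarrow> fv \<phi> \<subseteq> {..<length u + length v} \<and>
     (\<forall>x\<in>tuples M (length u). holds M \<phi> (x @ v) \<longrightarrow> same_tp M x u)"

lemma semi_isolated_iff: "semi_isolated M u v \<longleftrightarrow> (\<exists>\<phi>. holds M \<phi> (u @ v) \<and> semi_isolates M \<phi> u v)"
  by (auto simp: semi_isolated_def semi_isolates_def)

text \<open>M need not be homogeneous, so instead of moving v to v' by an automorphism we transfer
  the formulas \<open>\<not> (\<exists>x. \<phi>(x, w) \<and> \<not> \<rho>(x))\<close>, \<open>\<rho> \<in> tp(u)\<close>, from v to v'.\<close>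
lemma semi_isolates_transfer:
  assumes si: "semi_isolates M \<phi> u v" and v': "same_tp M v' v"
  shows "semi_isolates M \<phi> u v'"
proof -
  have fv: "fv \<phi> \<subseteq> {..<length u + length v}" and lv: "length v' = length v"
    using si same_tp_length[OF v'] by (auto simp: semi_isolates_def)
  have "same_tp M x u" if x: "x \<in> tuples M (length u)" "holds M \<phi> (x @ v')" for x
  proof (rule same_tpI)
    show "length x = length u"
      using x by (simp add: tuples_def)
    fix \<rho> assume \<rho>: "fv \<rho> \<subseteq> {..<length u}" "holds M \<rho> u"
    define \<chi> where "\<chi> = FConj \<phi> (FNeg \<rho>)"
    have fv\<chi>: "fv \<chi> \<subseteq> {..<length u + length v}"
      using fv \<rho>(1) by (auto simp: \<chi>_def)
    have \<chi>: "holds M \<chi> (y @ w) \<longleftrightarrow> holds M \<phi> (y @ w) \<and> \<not> holds M \<rho> y"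
      if "y \<in> tuples M (length u)" for y w
      using holds_append_right[where \<phi> = \<rho> and u = y and v = w] \<rho>(1) that by (simp add: \<chi>_def tuples_def)
    have "\<not> holds M \<chi> (y @ v)" if "y \<in> tuples M (length u)" for y
      using si \<rho> that \<chi> same_tp_holds[of M y u \<rho>] by (auto simp: semi_isolates_def tuples_def)
    then have "\<not> holds M (ex_prefix (length u) (length v) \<chi>) v"
      using holds_ex_prefix[OF fv\<chi>] by blast
    then have "\<not> holds M (ex_prefix (length u) (length v) \<chi>) v'"
      using same_tp_holds[OF v'] fv_ex_prefix[OF fv\<chi>] lv by auto
    then show "holds M \<rho> x"
      using holds_ex_prefix[of \<chi> "length u" v' M] fv\<chi> lv x \<chi> by auto
  qed
  then show ?thesis
    using fv lv by (simp add: semi_isolates_def)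
qed

lemma semi_isolated_of_semi_isolates:
  assumes si: "semi_isolates M \<phi> u v" and v': "same_tp M v' v"
    and z: "z \<in> tuples M (length u)" and hz: "holds M \<phi> (z @ v')"
  shows "semi_isolated M z v'"
proof -
  have si': "semi_isolates M \<phi> u v'"
    using si v' by (rule semi_isolates_transfer)
  then have "same_tp M z u"
    using z hz by (simp add: semi_isolates_def)
  then have "semi_isolates M \<phi> z v'"
    using si' by (auto simp: semi_isolates_def same_tp_length intro: same_tp_trans same_tp_sym)
  then show ?thesis
    using hz semi_isolated_iff by blast
qed

lemma semi_isolated_trans:
  assumes uv: "semi_isolated M u v" and vw: "semi_isolated M v w" and v: "set v \<subseteq> univ M"
  shows "semi_isolated M u w"
proof -
  obtain \<phi>\<^sub>1 where \<phi>\<^sub>1: "holds M \<phi>\<^sub>1 (u @ v)" "semi_isolates M \<phi>\<^sub>1 u v"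
    using uv semi_isolated_iff by blast
  obtain \<phi>\<^sub>2 where \<phi>\<^sub>2: "holds M \<phi>\<^sub>2 (v @ w)" "semi_isolates M \<phi>\<^sub>2 v w"
    using vw semi_isolated_iff by blast
  have fv\<^sub>1: "fv \<phi>\<^sub>1 \<subseteq> {..<length u + length v}" and fv\<^sub>2: "fv \<phi>\<^sub>2 \<subseteq> {..<length v + length w}"
    using \<phi>\<^sub>1(2) \<phi>\<^sub>2(2) by (auto simp: semi_isolates_def)
  define \<iota> where "\<iota> = FConj (ren (block_swap (length u) (length v)) \<phi>\<^sub>1) (ren (insert_gap (length v) (length u)) \<phi>\<^sub>2)"
  have fv\<iota>: "fv \<iota> \<subseteq> {..<length v + (length u + length w)}"
    using fv_ren_block_swap[OF fv\<^sub>1] fv_ren_insert_gap[OF fv\<^sub>2, of "length u"] by (auto simp: \<iota>_def)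
  have \<iota>: "holds M \<iota> (y @ x @ w) \<longleftrightarrow> holds M \<phi>\<^sub>1 (x @ y) \<and> holds M \<phi>\<^sub>2 (y @ w)"
    if "length x = length u" "length y = length v" for x y
  proof -
    have "holds M (ren (block_swap (length u) (length v)) \<phi>\<^sub>1) ((y @ x) @ w) =
        holds M (ren (block_swap (length u) (length v)) \<phi>\<^sub>1) (y @ x)"
      by (rule holds_append_right) (use fv_ren_block_swap[OF fv\<^sub>1] that in \<open>auto simp: add.commute\<close>)
    also have "\<dots> = holds M \<phi>\<^sub>1 (x @ y)"
      using holds_ren_block_swap[of \<phi>\<^sub>1 x y] fv\<^sub>1 that by simp
    finally have "holds M (ren (block_swap (length u) (length v)) \<phi>\<^sub>1) ((y @ x) @ w) =
        holds M \<phi>\<^sub>1 (x @ y)" .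
    then show ?thesis
      using holds_ren_insert_gap[of M y x \<phi>\<^sub>2 w] that by (simp add: \<iota>_def)
  qed
  define \<chi> where "\<chi> = ex_prefix (length v) (length u + length w) \<iota>"
  have \<chi>: "holds M \<chi> (x @ w) \<longleftrightarrow> (\<exists>y\<in>tuples M (length v). holds M \<phi>\<^sub>1 (x @ y) \<and> holds M \<phi>\<^sub>2 (y @ w))"
    if "length x = length u" for x
    using holds_ex_prefix[of \<iota> "length v" "x @ w" M] fv\<iota> \<iota> that by (simp add: \<chi>_def tuples_def)
  have "holds M \<chi> (u @ w)"
    using \<chi> \<phi>\<^sub>1(1) \<phi>\<^sub>2(1) v by (auto simp: tuples_def)
  moreover have "semi_isolates M \<chi> u w"
    unfolding semi_isolates_def
  proof (intro conjI ballI impI)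
    show "fv \<chi> \<subseteq> {..<length u + length w}"
      using fv_ex_prefix[OF fv\<iota>] by (simp add: \<chi>_def)
    fix x assume x: "x \<in> tuples M (length u)" "holds M \<chi> (x @ w)"
    then obtain y where y: "y \<in> tuples M (length v)" "holds M \<phi>\<^sub>1 (x @ y)" "holds M \<phi>\<^sub>2 (y @ w)"
      using \<chi> by (auto simp: tuples_def)
    then have "same_tp M y v"
      using \<phi>\<^sub>2(2) by (simp add: semi_isolates_def)
    then have "semi_isolates M \<phi>\<^sub>1 u y"
      using \<phi>\<^sub>1(2) semi_isolates_transfer by blast
    then show "same_tp M x u"
      using x(1) y(2) by (simp add: semi_isolates_def)
  qed
  ultimately show ?thesis
    using semi_isolated_iff by blast
qed

lemma semi_isolated_same_tp:
  assumes uv: "semi_isolated M u v" and tp: "same_tp M (u' @ v') (u @ v)"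
    and u': "u' \<in> tuples M (length u)"
  shows "semi_isolated M u' v'"
proof -
  obtain \<phi> where \<phi>: "holds M \<phi> (u @ v)" "semi_isolates M \<phi> u v"
    using uv semi_isolated_iff by blast
  have lu: "length u' = length u"
    using u' by (simp add: tuples_def)
  have "holds M \<phi> (u' @ v')"
    using \<phi> same_tp_holds[OF tp, of \<phi>] same_tp_length[OF tp] by (simp add: semi_isolates_def)
  moreover have "same_tp M v' v"
    using same_tp_suffix[OF tp lu] .
  ultimately show ?thesis
    using semi_isolated_of_semi_isolates[OF \<phi>(2) _ u'] by blast
qed

section \<open>Dividing along a chain of semi-isolated types\<close>

lemma forks_mono:
  assumes "forks M n P" and "\<And>xs. realizes M n xs Q \<Longrightarrow> realizes M n xs P"
  shows "forks M n Q"
  using assms unfolding forks_def by (elim exE conjE) (intro exI conjI; assumption | blast)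

lemma forks_of_pairwise_inconsistent:
  fixes d :: "nat \<Rightarrow> 'a list"
  assumes "fv \<psi> \<subseteq> {..<n + length (d 0)}"
    and "\<And>i. set (d i) \<subseteq> univ M" and "\<And>i. same_tp M (d i) (d 0)"
    and "\<And>xs. realizes M n xs P \<Longrightarrow> holds M \<psi> (xs @ d 0)"
    and inconsistent: "\<And>i j xs. i < j \<Longrightarrow> xs \<in> tuples M n \<Longrightarrow> holds M \<psi> (xs @ d i) \<Longrightarrow>
      \<not> holds M \<psi> (xs @ d j)"
  shows "forks M n P"
  unfolding forks_def
proof (intro exI[of _ \<psi>] exI[of _ d] exI[of _ "2 :: nat"] conjI allI impI)
  fix S :: "nat set" assume "card S = 2 \<and> finite S"
  then obtain i j where "S = {i, j}" "i \<noteq> j"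
    by (meson card_2_iff)
  then show "\<not> (\<exists>xs\<in>tuples M n. \<forall>i\<in>S. holds M \<psi> (xs @ d i))"
    using inconsistent by (auto dest: linorder_neqE_nat)
qed (use assms in auto)

lemma same_tp_chain:
  assumes sat: "aleph1_saturated M"
    and a: "set a \<subseteq> univ M" and b: "set b \<subseteq> univ M" and c: "set c \<subseteq> univ M"
    and ca: "same_tp M c a"
  obtains E B where "E 0 = a" "E 1 = c"
    "\<And>k. E k \<in> tuples M (length a)" "\<And>k. B k \<in> tuples M (length b)"
    "\<And>k. same_tp M (E (Suc k) @ B k @ E k) (c @ b @ a)"
proof -
  have lc: "length c = length a"
    using same_tp_length[OF ca] .
  define extends where "extends u p \<longleftrightarrow> fst p \<in> tuples M (length a) \<and>
      snd p \<in> tuples M (length b) \<and> same_tp M (fst p @ snd p @ u) (c @ b @ a)" for u p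
  have "\<exists>p. set u \<subseteq> univ M \<longrightarrow> same_tp M u a \<longrightarrow> extends u p" for u
  proof (cases "set u \<subseteq> univ M \<and> same_tp M u a")
    case True
    then obtain q where "q \<in> tuples M (length (c @ b))" "same_tp M (q @ u) ((c @ b) @ a)"
      using same_tp_extend[OF sat, of u a "c @ b"] b c by auto
    then show ?thesis
      using lc unfolding extends_def
      by (intro exI[of _ "(take (length c) q, drop (length c) q)"])
        (auto simp: tuples_def simp flip: append_assoc dest: in_set_takeD in_set_dropD)
  qed blast
  then obtain step where step: "\<And>u. set u \<subseteq> univ M \<Longrightarrow> same_tp M u a \<Longrightarrow> extends u (step u)"
    using choice[of "\<lambda>u p. set u \<subseteq> univ M \<longrightarrow> same_tp M u a \<longrightarrow> extends u p"] by blast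
  define F where "F k = ((\<lambda>p. step (fst p)) ^^ k) (c, b)" for k
  define E where "E k = (case k of 0 \<Rightarrow> a | Suc j \<Rightarrow> fst (F j))" for k
  have F: "fst (F k) \<in> tuples M (length a) \<and> snd (F k) \<in> tuples M (length b) \<and>
      same_tp M (fst (F k) @ snd (F k) @ E k) (c @ b @ a)" for k
  proof (induction k)
    case 0
    show ?case
      using a b c lc by (simp add: F_def E_def tuples_def same_tp_refl)
  next
    case (Suc k)
    then have "same_tp M (E (Suc k)) c"
      using same_tp_prefix[of M "fst (F k)" "snd (F k) @ E k" c "b @ a"] lc
      by (simp add: E_def tuples_def)
    then have "set (E (Suc k)) \<subseteq> univ M" "same_tp M (E (Suc k)) a"
      using Suc ca same_tp_trans by (auto simp: E_def tuples_def)
    then show ?case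
      using step by (simp add: F_def E_def extends_def)
  qed
  show ?thesis
  proof (rule that[of E "\<lambda>k. snd (F k)"])
    show "E 0 = a" "E 1 = c"
      by (simp_all add: E_def F_def)
    show "E k \<in> tuples M (length a)" for k
      using F a by (cases k) (auto simp: E_def tuples_def)
    show "snd (F k) \<in> tuples M (length b)" "same_tp M (E (Suc k) @ snd (F k) @ E k) (c @ b @ a)" for k
      using F[of k] by (simp_all add: E_def)
  qed
qed

definition between_fm :: "nat \<Rightarrow> ('f, 'r) fm \<Rightarrow> ('f, 'r) fm" where
  "between_fm n \<phi> = FConj (ren (block_swap n n) \<phi>) (ren (insert_gap n n) \<phi>)"

lemma fv_between_fm: "fv \<phi> \<subseteq> {..<n + n} \<Longrightarrow> fv (between_fm n \<phi>) \<subseteq> {..<n + n + n}"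
  using fv_ren_block_swap[of \<phi> n n] fv_ren_insert_gap[of \<phi> n n n] by (auto simp: between_fm_def)

lemma holds_between_fm:
  assumes "fv \<phi> \<subseteq> {..<n + n}" "length x = n" "length y = n"
  shows "holds M (between_fm n \<phi>) (x @ y @ z) \<longleftrightarrow> holds M \<phi> (y @ x) \<and> holds M \<phi> (x @ z)"
proof -
  have "holds M (ren (block_swap n n) \<phi>) ((x @ y) @ z) = holds M (ren (block_swap n n) \<phi>) (x @ y)"
    by (rule holds_append_right) (use fv_ren_block_swap[OF assms(1)] assms(2,3) in auto)
  also have "\<dots> = holds M \<phi> (y @ x)"
    using holds_ren_block_swap[where u = x and v = y] assms by simp
  finally have "holds M (ren (block_swap n n) \<phi>) ((x @ y) @ z) = holds M \<phi> (y @ x)" .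
  then show ?thesis
    using holds_ren_insert_gap[of M x y \<phi> z] assms by (simp add: between_fm_def)
qed

locale semi_isolating_chain =
  fixes M :: "('a, 'f, 'r) struc" and \<phi> :: "('f, 'r) fm"
    and a b c :: "'a list" and E B :: "nat \<Rightarrow> 'a list"
  assumes ab: "same_tp M a b"
    and not_semi_isolated: "\<not> semi_isolated M a b"
    and \<phi>_semi_isolates: "semi_isolates M \<phi> b a"
    and \<phi>_ba: "holds M \<phi> (b @ a)"
    and cb_ba: "same_tp M (c @ b) (b @ a)"
    and E_0: "E 0 = a" and E_1: "E 1 = c"
    and E_tuples: "E k \<in> tuples M (length a)"
    and B_tuples: "B k \<in> tuples M (length b)"
    and chain_tp: "same_tp M (E (Suc k) @ B k @ E k) (c @ b @ a)"
begin

lemma length_a: "length a = length b"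
  using same_tp_length[OF ab] .

lemma length_c: "length c = length b"
  using same_tp_length[OF cb_ba] length_a by simp

lemma length_E: "length (E k) = length b"
  using E_tuples length_a by (simp add: tuples_def)

lemma length_B: "length (B k) = length b"
  using B_tuples by (simp add: tuples_def)

lemma fv_\<phi>: "fv \<phi> \<subseteq> {..<length b + length b}"
  using \<phi>_semi_isolates length_a by (simp add: semi_isolates_def)

lemma B_E_tp: "same_tp M (B k @ E k) (b @ a)"
  using same_tp_suffix[OF chain_tp] length_E length_c by simp

lemma E_tp: "same_tp M (E k) a"
  using same_tp_suffix[OF B_E_tp] length_B by simp

lemma B_tp: "same_tp M (B k) a"
  using same_tp_prefix[OF B_E_tp] length_B same_tp_trans same_tp_sym ab by blast

lemma E_B_tp: "same_tp M (E k @ B k) (a @ b)"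
  using same_tp_swap[OF B_E_tp] length_B by simp

lemma holds_\<phi>_E_B: "holds M \<phi> (E (Suc k) @ B k)"
proof -
  have "same_tp M (E (Suc k) @ B k) (c @ b)"
    using same_tp_prefix[of M "E (Suc k) @ B k" "E k" "c @ b" a] chain_tp length_E length_B length_c
    by simp
  then have "same_tp M (E (Suc k) @ B k) (b @ a)"
    using cb_ba same_tp_trans by blast
  then show ?thesis
    using same_tp_holds \<phi>_ba fv_\<phi> length_E length_B by fastforce
qed

lemma holds_\<phi>_cb: "holds M \<phi> (c @ b)"
  using same_tp_holds[OF cb_ba] \<phi>_ba fv_\<phi> length_c by fastforce

lemma holds_\<phi>_B_E: "holds M \<phi> (B k @ E k)"
  using same_tp_holds[OF B_E_tp] \<phi>_ba fv_\<phi> length_E length_B by fastforce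

lemma semi_isolated_E_B: "semi_isolated M (E (Suc k)) (B k)"
  using semi_isolated_of_semi_isolates[OF \<phi>_semi_isolates B_tp] E_tuples holds_\<phi>_E_B length_a
  by simp

lemma semi_isolated_B_E: "semi_isolated M (B k) (E k)"
  using semi_isolated_of_semi_isolates[OF \<phi>_semi_isolates E_tp B_tuples holds_\<phi>_B_E] .

lemma semi_isolated_E_B_less: "k < m \<Longrightarrow> semi_isolated M (E m) (B k)"
proof (induction m)
  case (Suc m)
  show ?case
  proof (cases "k = m")
    case False
    then have "semi_isolated M (E m) (B k)"
      using Suc by simp
    then have "semi_isolated M (B m) (B k)"
      using semi_isolated_trans[OF semi_isolated_B_E] E_tuples by (auto simp: tuples_def)
    then show ?thesis
      using semi_isolated_trans[OF semi_isolated_E_B] B_tuples by (auto simp: tuples_def)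
  qed (simp add: semi_isolated_E_B)
qed simp

text \<open>If \<open>x\<close> lay between \<open>E\<^sub>2\<^sub>i\<^sub>+\<^sub>1\<close> and \<open>E\<^sub>2\<^sub>j\<close>, the chain
  \<open>E\<^sub>2\<^sub>i\<^sub>+\<^sub>1, x, E\<^sub>2\<^sub>j, B\<^sub>2\<^sub>i\<^sub>+\<^sub>1\<close> of semi-isolated types would make
  \<open>tp(E\<^sub>2\<^sub>i\<^sub>+\<^sub>1/B\<^sub>2\<^sub>i\<^sub>+\<^sub>1) = tp(a/b)\<close> semi-isolated.\<close>
lemma between_fm_inconsistent:
  assumes ij: "i < j" and x: "x \<in> tuples M (length b)"
    and hi: "holds M (between_fm (length b) \<phi>) (x @ E (Suc (2 * i)) @ E (2 * i))"
  shows "\<not> holds M (between_fm (length b) \<phi>) (x @ E (Suc (2 * j)) @ E (2 * j))"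
proof
  assume hj: "holds M (between_fm (length b) \<phi>) (x @ E (Suc (2 * j)) @ E (2 * j))"
  have lx: "length x = length b"
    using x by (simp add: tuples_def)
  have \<phi>_E_x: "holds M \<phi> (E (Suc (2 * i)) @ x)" and \<phi>_x_E: "holds M \<phi> (x @ E (2 * j))"
    using hi hj holds_between_fm[OF fv_\<phi> lx length_E] by auto
  have "same_tp M x b"
    using semi_isolates_transfer[OF \<phi>_semi_isolates E_tp] x \<phi>_x_E by (simp add: semi_isolates_def)
  then have "same_tp M x a"
    using ab same_tp_sym same_tp_trans by blast
  then have "semi_isolated M (E (Suc (2 * i))) x"
    using semi_isolated_of_semi_isolates[OF \<phi>_semi_isolates] E_tuples \<phi>_E_x length_a by simp
  moreover have "semi_isolated M x (B (Suc (2 * i)))"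
    using semi_isolated_trans[OF semi_isolated_of_semi_isolates[OF \<phi>_semi_isolates E_tp x \<phi>_x_E]
        semi_isolated_E_B_less] ij E_tuples by (auto simp: tuples_def)
  ultimately have "semi_isolated M (E (Suc (2 * i))) (B (Suc (2 * i)))"
    using semi_isolated_trans x by (auto simp: tuples_def)
  then have "semi_isolated M a b"
    using semi_isolated_same_tp[OF _ same_tp_sym[OF E_B_tp]] E_tuples[of 0] E_0 length_E length_a
    by (simp add: tuples_def)
  with not_semi_isolated show False ..
qed

lemma between_fm_forks: "forks M (length b) {split_pfm (length b) (between_fm (length b) \<phi>) (c @ a)}"
proof (rule forks_of_pairwise_inconsistent[where d = "\<lambda>i. E (Suc (2 * i)) @ E (2 * i)"])
  show "fv (between_fm (length b) \<phi>) \<subseteq> {..<length b + length (E (Suc (2 * 0)) @ E (2 * 0))}"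
    using fv_between_fm[OF fv_\<phi>] length_E by (simp add: add.assoc)
  show "set (E (Suc (2 * i)) @ E (2 * i)) \<subseteq> univ M" for i
    using E_tuples by (simp add: tuples_def)
  show "same_tp M (E (Suc (2 * i)) @ E (2 * i)) (E (Suc (2 * 0)) @ E (2 * 0))" for i
    using same_tp_drop_middle[OF chain_tp] length_E length_B length_c E_0 E_1 by simp
  show "holds M (between_fm (length b) \<phi>) (xs @ E (Suc (2 * 0)) @ E (2 * 0))"
    if "realizes M (length b) xs {split_pfm (length b) (between_fm (length b) \<phi>) (c @ a)}" for xs
    using that E_0 E_1 by (auto simp: realizes_def tuples_def holds_p_split_pfm)
  show "\<not> holds M (between_fm (length b) \<phi>) (xs @ E (Suc (2 * j)) @ E (2 * j))"
    if "i < j" "xs \<in> tuples M (length b)"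
      "holds M (between_fm (length b) \<phi>) (xs @ E (Suc (2 * i)) @ E (2 * i))" for i j xs
    using between_fm_inconsistent that .
qed

end

theorem mainTheorem6:
  fixes M :: "('a, 'f, 'r) struc"
    and a b c :: "'a list"
    and \<phi> :: "('f, 'r) fm"
  assumes "is_struc M"
    and "aleph1_saturated M"
    and "set a \<subseteq> univ M" and "set b \<subseteq> univ M" and "set c \<subseteq> univ M"
    and "same_tp M a b"
    and "\<not> semi_isolated M a b"
    and "fv \<phi> \<subseteq> {..<length b + length a}"
    and "holds M \<phi> (b @ a)"
    and "\<forall>b'\<in>tuples M (length b). holds M \<phi> (b' @ a) \<longrightarrow> same_tp M b' b"
    and "same_tp M (c @ b) (b @ a)"
  shows "forks M (length b)
           {(\<phi>, map Inr c @ map Inl [0..<length b]), (\<phi>, map Inl [0..<length b] @ map Inr a)}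
         \<and> forks M (length b) (tp_over M b (c @ a))"
proof -
  let ?n = "length b" and ?\<psi> = "between_fm (length b) \<phi>"
  have "length c = ?n"
    using same_tp_length[OF assms(11)] same_tp_length[OF assms(6)] by simp
  then have "same_tp M c a"
    using same_tp_prefix[OF assms(11)] same_tp_trans same_tp_sym assms(6) by blast
  then obtain E B where chain: "E 0 = a" "E 1 = c" "\<And>k. E k \<in> tuples M (length a)"
      "\<And>k. B k \<in> tuples M ?n" "\<And>k. same_tp M (E (Suc k) @ B k @ E k) (c @ b @ a)"
    using same_tp_chain assms(2-5) by blast
  interpret semi_isolating_chain M \<phi> a b c E B
    using assms(6-11) chain by unfold_locales (simp_all add: semi_isolates_def)
  have \<psi>: "holds M ?\<psi> (x @ c @ a) \<longleftrightarrow> holds M \<phi> (c @ x) \<and> holds M \<phi> (x @ a)" if "length x = ?n" for x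
    using holds_between_fm[OF fv_\<phi> that length_c] .
  show ?thesis
  proof
    show "forks M ?n {(\<phi>, map Inr c @ map Inl [0..<?n]), (\<phi>, map Inl [0..<?n] @ map Inr a)}"
      using between_fm_forks
    proof (rule forks_mono)
      fix xs assume "realizes M ?n xs {(\<phi>, map Inr c @ map Inl [0..<?n]), (\<phi>, map Inl [0..<?n] @ map Inr a)}"
      then have "xs \<in> tuples M ?n" "holds M \<phi> (c @ xs)" "holds M \<phi> (xs @ a)"
        by (auto simp: realizes_def tuples_def holds_p_Inr_Inl holds_p_split_pfm[unfolded split_pfm_def])
      then show "realizes M ?n xs {split_pfm ?n ?\<psi> (c @ a)}"
        using \<psi> by (simp add: realizes_def tuples_def holds_p_split_pfm)
    qed
    have \<psi>_tp: "split_pfm ?n ?\<psi> (c @ a) \<in> tp_over M b (c @ a)"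
      using fv_between_fm[OF fv_\<phi>] \<psi>[of b] holds_\<phi>_cb \<phi>_ba length_a length_c
      by (auto simp: tp_over_def add.assoc)
    show "forks M ?n (tp_over M b (c @ a))"
      using between_fm_forks by (rule forks_mono) (use \<psi>_tp in \<open>auto simp: realizes_def\<close>)
  qed
qed

end
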